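(* For every integer $n\ge 10$ there exists a simple undirected graph $G$ on $n$ vertices whose interlace polynomial $q(G)$ has a non-unimodal coefficient sequence. In particular, there is a graph on 10 vertices with $q(G)=2x+7x^2+6x^3+7x^4+4x^5+3x^6+2x^7+x^8$.
   Context: All graphs are finite, simple and undirected. For a vertex $u$, $G\setminus u$ denotes $G$ with $u$ and all its incident edges removed. For a vertex $v$ with neighbourhood $N_v$, local complementation $G*v$ replaces the induced subgraph of $G$ on $N_v$ by its complement. For an edge $\{u,v\}$, edge local complementation is $G^{(uv)}=G*u*v*u$. The interlace polynomial $q(G)=q(G,x)$ is defined recursively: for the edgeless graph $E_n$ on $n$ vertices, $q(E_n)=x^n$; for any other graph $G$, choose any edge $\{u,v\}$ and set $q(G)=q(G\setminus u)+q(G^{(uv)}\setminus u)$ (independent of the choice of edge). The coefficient sequence $(a_1,\dots,a_d)$ of $q(G)=\sum_{i=1}^d a_ix^i$ is unimodal if there is $k$ with $a_1\le\cdots\le a_k$ and $a_k\ge\cdots\ge a_d$. *)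

theory Defs
  imports "HOL-Computational_Algebra.Polynomial"
begin

text \<open>A finite simple undirected graph with vertices in nat: a vertex set V and a set E
of edges, each edge being a 2-element subset of V.\<close>

type_synonym graph = "nat set \<times> nat set set"

definition simple_graph :: "graph \<Rightarrow> bool" where
  "simple_graph G \<longleftrightarrow> finite (fst G) \<and> (\<forall>e\<in>snd G. e \<subseteq> fst G \<and> card e = 2)"

definition nbhd :: "graph \<Rightarrow> nat \<Rightarrow> nat set" where
  "nbhd G v = {w. {v, w} \<in> snd G}"

definition del_vertex :: "graph \<Rightarrow> nat \<Rightarrow> graph" where
  "del_vertex G u = (fst G - {u}, {e \<in> snd G. u \<notin> e})"

definition local_comp :: "graph \<Rightarrow> nat \<Rightarrow> graph" where
  "local_comp G v =
     (let P = {{a, b} | a b. a \<in> nbhd G v \<and> b \<in> nbhd G v \<and> a \<noteq> b}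
      in (fst G, (snd G - P) \<union> (P - snd G)))"

definition edge_local_comp :: "graph \<Rightarrow> nat \<Rightarrow> nat \<Rightarrow> graph" where
  "edge_local_comp G u v = local_comp (local_comp (local_comp G u) v) u"

text \<open>A canonical edge choice {u,v}: u the least vertex incident to an edge, v its least
neighbour. (The recursion is independent of the choice of edge.)\<close>
definition edge_u :: "graph \<Rightarrow> nat" where
  "edge_u G = Min {a. \<exists>b. {a, b} \<in> snd G \<and> a \<noteq> b}"

definition edge_v :: "graph \<Rightarrow> nat" where
  "edge_v G = Min {b. {edge_u G, b} \<in> snd G \<and> b \<noteq> edge_u G}"

text \<open>Recursion with fuel (the number of vertices decreases by one in each step).\<close>
fun interlace_aux :: "nat \<Rightarrow> graph \<Rightarrow> int poly" where
  "interlace_aux 0 G = monom 1 (card (fst G))"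
| "interlace_aux (Suc k) G =
     (if snd G = {} then monom 1 (card (fst G))
      else interlace_aux k (del_vertex G (edge_u G))
         + interlace_aux k (del_vertex (edge_local_comp G (edge_u G) (edge_v G)) (edge_u G)))"

definition interlace_poly :: "graph \<Rightarrow> int poly" where
  "interlace_poly G = interlace_aux (card (fst G)) G"

definition unimodal_coeffs :: "int poly \<Rightarrow> bool" where
  "unimodal_coeffs p \<longleftrightarrow>
     (\<exists>k. (\<forall>i j. 1 \<le> i \<and> i \<le> j \<and> j \<le> k \<longrightarrow> coeff p i \<le> coeff p j) \<and>
          (\<forall>i j. k \<le> i \<and> i \<le> j \<and> j \<le> degree p \<longrightarrow> coeff p i \<ge> coeff p j))"

end

theory Submission
  imports Defs
begin

(* The interlace polynomial of the graph E_10 below, two stars centred at 4 and 8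
   which share the leaves 1 and 3, is evaluated directly:
   q = 2x + 7x^2 + 6x^3 + 7x^4 + 4x^5 + 3x^6 + 2x^7 + x^8.  Its coefficients 7, 6, 7 form a
   strict dip, so it is not unimodal.  For n >= 10 the same edges on the vertex set {0..<n}
   give q = x^(n-10) * q(E_10), because every isolated vertex contributes a factor x, and a
   shift by a monomial preserves the dip. *)

lemma simple_graph_edge_endpoints:
  assumes "simple_graph G" "{a, b} \<in> snd G"
  shows "a \<in> fst G" "b \<in> fst G"
  using assms unfolding simple_graph_def by auto

lemma del_vertex_simple: "simple_graph G \<Longrightarrow> simple_graph (del_vertex G u)"
  unfolding simple_graph_def del_vertex_def by auto

lemma local_comp_fst [simp]: "fst (local_comp G v) = fst G"
  unfolding local_comp_def Let_def by simp

lemma edge_local_comp_fst [simp]: "fst (edge_local_comp G u v) = fst G"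
  unfolding edge_local_comp_def by simp

text \<open>Local complementation only adds edges between two neighbours of the pivot, hence
  between two vertices of the graph.\<close>
lemma local_comp_simple:
  assumes simple: "simple_graph G"
  shows "simple_graph (local_comp G v)"
proof -
  have "e \<subseteq> fst G \<and> card e = 2" if e: "e \<in> snd (local_comp G v)" for e
  proof -
    from e consider "e \<in> snd G"
      | a b where "e = {a, b}" "{v, a} \<in> snd G" "{v, b} \<in> snd G" "a \<noteq> b"
      unfolding local_comp_def Let_def nbhd_def by auto
    then show ?thesis
      by cases (use simple simple_graph_edge_endpoints[OF simple] in
                \<open>auto simp: simple_graph_def\<close>)
  qed
  then show ?thesis
    using simple unfolding simple_graph_def by simp
qed

lemma edge_local_comp_simple: "simple_graph G \<Longrightarrow> simple_graph (edge_local_comp G u v)"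
  unfolding edge_local_comp_def by (intro local_comp_simple)

lemma edge_u_in_vertices:
  assumes simple: "simple_graph G" and "snd G \<noteq> {}"
  shows "edge_u G \<in> fst G"
proof -
  let ?S = "{a. \<exists>b. {a, b} \<in> snd G \<and> a \<noteq> b}"
  have S_sub: "?S \<subseteq> fst G"
    using simple_graph_edge_endpoints[OF simple] by auto
  obtain e where "e \<in> snd G" using assms(2) by auto
  then obtain a b where "{a, b} \<in> snd G" "a \<noteq> b"
    using simple unfolding simple_graph_def by (metis card_2_iff)
  then have "?S \<noteq> {}" by auto
  moreover have "finite ?S"
    using S_sub simple unfolding simple_graph_def by (auto intro: finite_subset)
  ultimately have "Min ?S \<in> ?S" by (rule Min_in[rotated])
  then show ?thesis unfolding edge_u_def using S_sub by auto
qed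

lemma local_comp_edges_cong: "snd G = snd H \<Longrightarrow> snd (local_comp G v) = snd (local_comp H v)"
  unfolding local_comp_def nbhd_def Let_def by simp

lemma edge_local_comp_edges_cong:
  "snd G = snd H \<Longrightarrow> snd (edge_local_comp G u v) = snd (edge_local_comp H u v)"
  unfolding edge_local_comp_def by (intro local_comp_edges_cong)

lemma edge_u_cong: "snd G = snd H \<Longrightarrow> edge_u G = edge_u H"
  unfolding edge_u_def by simp

lemma edge_v_cong: "snd G = snd H \<Longrightarrow> edge_v G = edge_v H"
  using edge_u_cong[of G H] unfolding edge_v_def by simp

lemma interlace_aux_pivot_step:
  fixes A :: "nat set" and E :: "nat set set" and k :: nat
  assumes "E \<noteq> {}"
  defines "u \<equiv> edge_u (A, E)"
    and "E' \<equiv> snd (edge_local_comp (A, E) (edge_u (A, E)) (edge_v (A, E)))"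
  shows "interlace_aux (Suc k) (A, E) =
           interlace_aux k (A - {u}, {e \<in> E. u \<notin> e})
         + interlace_aux k (A - {u}, {e \<in> E'. u \<notin> e})"
proof -
  have "edge_local_comp (A, E) (edge_u (A, E)) (edge_v (A, E)) = (A, E')"
    unfolding E'_def by (simp add: prod_eq_iff)
  then show ?thesis
    using assms(1) unfolding u_def by (simp add: del_vertex_def)
qed

lemma pivot_subgraphs_simple:
  assumes "simple_graph (A, E)"
  shows "simple_graph (A - {u}, {e \<in> E. u \<notin> e})"
    and "simple_graph (A - {u}, {e \<in> snd (edge_local_comp (A, E) u v). u \<notin> e})"
proof -
  show "simple_graph (A - {u}, {e \<in> E. u \<notin> e})"
    using del_vertex_simple[OF assms, of u] by (simp add: del_vertex_def)
  have "simple_graph (A, snd (edge_local_comp (A, E) u v))"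
    using edge_local_comp_simple[OF assms, of u v] by (metis edge_local_comp_fst fst_conv prod.collapse)
  then show "simple_graph (A - {u}, {e \<in> snd (edge_local_comp (A, E) u v). u \<notin> e})"
    using del_vertex_simple[of "(A, snd (edge_local_comp (A, E) u v))" u]
    by (simp add: del_vertex_def)
qed

lemma interlace_aux_edgeless: "interlace_aux k (A, {}) = monom 1 (card A)"
  by (cases k) simp_all

text \<open>Each recursion step removes one vertex, so any fuel of at least the number of
  vertices gives the same result; this lets us compare graphs with different vertex sets.\<close>
lemma interlace_aux_fuel:
  assumes "simple_graph (A, E)" "card A \<le> k"
  shows "interlace_aux k (A, E) = interlace_aux (card A) (A, E)"
  using assms
proof (induction k arbitrary: A E)
  case 0
  then show ?case by simp
next
  case (Suc k)
  show ?case
  proof (cases "E = {}")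
    case True
    then show ?thesis by (simp add: interlace_aux_edgeless)
  next
    case False
    define u where "u = edge_u (A, E)"
    define E' where "E' = snd (edge_local_comp (A, E) u (edge_v (A, E)))"
    have "u \<in> A"
      using edge_u_in_vertices[OF Suc.prems(1)] False unfolding u_def by simp
    moreover have "finite A" using Suc.prems(1) unfolding simple_graph_def by simp
    ultimately obtain c where c: "card A = Suc c" "card (A - {u}) = c"
      by (metis card_Suc_Diff1)
    note simple1 = pivot_subgraphs_simple(1)[OF Suc.prems(1), of u]
    note simple2 = pivot_subgraphs_simple(2)[OF Suc.prems(1), of u "edge_v (A, E)", folded E'_def]
    have "c \<le> k" using Suc.prems(2) c by simp
    have "interlace_aux (Suc k) (A, E) =
            interlace_aux k (A - {u}, {e \<in> E. u \<notin> e})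
          + interlace_aux k (A - {u}, {e \<in> E'. u \<notin> e})"
      using interlace_aux_pivot_step[OF False, where A = A and k = k] unfolding u_def E'_def .
    also have "\<dots> = interlace_aux c (A - {u}, {e \<in> E. u \<notin> e})
                    + interlace_aux c (A - {u}, {e \<in> E'. u \<notin> e})"
      using Suc.IH[OF simple1] Suc.IH[OF simple2] \<open>c \<le> k\<close> c(2) by simp
    also have "\<dots> = interlace_aux (card A) (A, E)"
      using interlace_aux_pivot_step[OF False, where A = A and k = c] c(1)
      unfolding u_def E'_def by simp
    finally show ?thesis .
  qed
qed

lemma interlace_poly_fuel:
  "simple_graph (A, E) \<Longrightarrow> card A \<le> k \<Longrightarrow> interlace_aux k (A, E) = interlace_poly (A, E)"
  unfolding interlace_poly_def fst_conv by (rule interlace_aux_fuel)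

text \<open>Adding a finite set I of isolated vertices multiplies the result by x^|I|, since
  the recursion never touches them and they are counted in every edgeless leaf.\<close>
lemma interlace_aux_isolated:
  assumes "simple_graph (V, E)" "finite I" "V \<inter> I = {}"
  shows "interlace_aux k (V \<union> I, E) = monom 1 (card I) * interlace_aux k (V, E)"
  using assms
proof (induction k arbitrary: V E)
  case 0
  then show ?case
    by (simp add: simple_graph_def card_Un_disjoint mult_monom add.commute)
next
  case (Suc k)
  show ?case
  proof (cases "E = {}")
    case True
    then show ?thesis using Suc.prems
      by (simp add: simple_graph_def card_Un_disjoint mult_monom add.commute)
  next
    case False
    define u where "u = edge_u (V, E)"
    define E' where "E' = snd (edge_local_comp (V, E) u (edge_v (V, E)))"
    have same_u: "edge_u (V \<union> I, E) = u" and same_v: "edge_v (V \<union> I, E) = edge_v (V, E)"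
      unfolding u_def by (simp_all only: edge_u_cong[of "(V \<union> I, E)" "(V, E)"]
                                         edge_v_cong[of "(V \<union> I, E)" "(V, E)"] snd_conv)
    have same_E': "snd (edge_local_comp (V \<union> I, E) u (edge_v (V, E))) = E'"
      unfolding E'_def by (rule edge_local_comp_edges_cong) simp
    have "u \<in> V"
      using edge_u_in_vertices[OF Suc.prems(1)] False unfolding u_def by simp
    then have del: "V \<union> I - {u} = (V - {u}) \<union> I" and disj: "(V - {u}) \<inter> I = {}"
      using Suc.prems(3) by auto
    note simple1 = pivot_subgraphs_simple(1)[OF Suc.prems(1), of u]
    note simple2 = pivot_subgraphs_simple(2)[OF Suc.prems(1), of u "edge_v (V, E)", folded E'_def]
    have "interlace_aux (Suc k) (V \<union> I, E) =
            interlace_aux k ((V - {u}) \<union> I, {e \<in> E. u \<notin> e})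
          + interlace_aux k ((V - {u}) \<union> I, {e \<in> E'. u \<notin> e})"
      using interlace_aux_pivot_step[OF False, where A = "V \<union> I" and k = k] same_u same_v same_E' del
      unfolding u_def by simp
    also have "\<dots> = monom 1 (card I) * (interlace_aux k (V - {u}, {e \<in> E. u \<notin> e})
                                     + interlace_aux k (V - {u}, {e \<in> E'. u \<notin> e}))"
      using Suc.IH[OF simple1 Suc.prems(2) disj] Suc.IH[OF simple2 Suc.prems(2) disj]
      by (simp add: distrib_left)
    also have "\<dots> = monom 1 (card I) * interlace_aux (Suc k) (V, E)"
      using interlace_aux_pivot_step[OF False, where A = V and k = k] unfolding u_def E'_def by simp
    finally show ?thesis .
  qed
qed

text \<open>The defining sets of nbhd, local_comp, edge_u and edge_v are comprehensions over all
  of nat; the versions below range over the (finite) vertex set instead, so that the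
  recursion can be evaluated by rewriting.\<close>

definition nbhd_code :: "graph \<Rightarrow> nat \<Rightarrow> nat set" where
  "nbhd_code G v = Set.filter (\<lambda>w. {v, w} \<in> snd G) (fst G)"

definition local_comp_code :: "graph \<Rightarrow> nat \<Rightarrow> graph" where
  "local_comp_code G v =
     (let N = nbhd_code G v;
          P = (\<lambda>(a, b). {a, b}) ` Set.filter (\<lambda>(a, b). a \<noteq> b) (N \<times> N)
      in (fst G, (snd G - P) \<union> (P - snd G)))"

definition edge_u_code :: "graph \<Rightarrow> nat" where
  "edge_u_code G = Min (Set.filter (\<lambda>a. \<exists>b\<in>fst G. {a, b} \<in> snd G \<and> a \<noteq> b) (fst G))"

definition edge_v_code :: "graph \<Rightarrow> nat" where
  "edge_v_code G = Min (Set.filter (\<lambda>b. {edge_u_code G, b} \<in> snd G \<and> b \<noteq> edge_u_code G) (fst G))"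

fun interlace_code :: "nat \<Rightarrow> graph \<Rightarrow> int poly" where
  "interlace_code 0 G = monom 1 (card (fst G))"
| "interlace_code (Suc k) G =
     (if snd G = {} then monom 1 (card (fst G))
      else interlace_code k (del_vertex G (edge_u_code G))
         + interlace_code k (del_vertex (local_comp_code (local_comp_code
              (local_comp_code G (edge_u_code G)) (edge_v_code G)) (edge_u_code G)) (edge_u_code G)))"

lemma nbhd_code_eq: "simple_graph G \<Longrightarrow> nbhd_code G v = nbhd G v"
  unfolding nbhd_code_def nbhd_def using simple_graph_edge_endpoints[of G] by auto

lemma local_comp_code_eq: "simple_graph G \<Longrightarrow> local_comp_code G v = local_comp G v"
proof -
  have pairs: "(\<lambda>(a, b). {a, b}) ` Set.filter (\<lambda>(a, b). a \<noteq> b) (N \<times> N)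
                 = {{a, b} | a b. a \<in> N \<and> b \<in> N \<and> a \<noteq> b}" for N :: "nat set"
    by (auto simp: image_iff)
  show "simple_graph G \<Longrightarrow> ?thesis"
    unfolding local_comp_code_def local_comp_def Let_def pairs by (simp add: nbhd_code_eq)
qed

lemma edge_u_code_eq: "simple_graph G \<Longrightarrow> edge_u_code G = edge_u G"
  unfolding edge_u_code_def edge_u_def
  by (rule arg_cong[where f = Min]) (use simple_graph_edge_endpoints[of G] in auto)

lemma edge_v_code_eq: "simple_graph G \<Longrightarrow> edge_v_code G = edge_v G"
  unfolding edge_v_code_def edge_v_def
  by (simp add: edge_u_code_eq, rule arg_cong[where f = Min])
     (use simple_graph_edge_endpoints[of G] in auto)

lemma interlace_code_eq: "simple_graph G \<Longrightarrow> interlace_code k G = interlace_aux k G"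
proof (induction k arbitrary: G)
  case 0
  then show ?case by simp
next
  case (Suc k)
  have "local_comp_code (local_comp_code (local_comp_code G (edge_u G)) (edge_v_code G)) (edge_u G)
          = edge_local_comp G (edge_u G) (edge_v G)"
    using Suc.prems
    by (simp add: edge_v_code_eq local_comp_code_eq local_comp_simple edge_local_comp_def)
  then show ?case
    using Suc by (simp add: edge_u_code_eq del_vertex_simple edge_local_comp_simple)
qed

lemma dip_not_unimodal:
  assumes "1 \<le> i" "i \<le> j" "j \<le> l" "l \<le> degree p"
    and left: "coeff p j < coeff p i" and right: "coeff p j < coeff p l"
  shows "\<not> unimodal_coeffs p"
proof
  assume "unimodal_coeffs p"
  then obtain k where
    up: "\<forall>i j. 1 \<le> i \<and> i \<le> j \<and> j \<le> k \<longrightarrow> coeff p i \<le> coeff p j" and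
    down: "\<forall>i j. k \<le> i \<and> i \<le> j \<and> j \<le> degree p \<longrightarrow> coeff p i \<ge> coeff p j"
    unfolding unimodal_coeffs_def by blast
  show False
  proof (cases "j \<le> k")
    case True
    then have "coeff p i \<le> coeff p j" using up assms(1,2) by blast
    then show False using left by simp
  next
    case False
    then have "coeff p l \<le> coeff p j" using down assms(3,4) by simp
    then show False using right by simp
  qed
qed

lemma coeff_monom_shift:
  fixes p :: "'a :: comm_semiring_1 poly"
  shows "coeff (monom 1 m * p) (m + j) = coeff p j"
  by (simp add: coeff_monom_mult)

lemma degree_monom_shift:
  "p \<noteq> 0 \<Longrightarrow> degree (monom (1 :: 'a :: idom) m * p) = m + degree p"
  by (simp add: degree_mult_eq degree_monom_eq)

definition example_edges :: "nat set set" where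
  "example_edges = {{0,8}, {1,4}, {1,8}, {2,4}, {3,4}, {3,8}, {4,7}, {4,9}, {5,8}, {6,8}}"

abbreviation example_poly :: "int poly" where
  "example_poly \<equiv> [:0, 2, 7, 6, 7, 4, 3, 2, 1:]"

lemma example_simple: "10 \<le> n \<Longrightarrow> simple_graph ({0..<n}, example_edges)"
  unfolding simple_graph_def example_edges_def by auto

lemma example_interlace_10: "interlace_poly ({0..<10}, example_edges) = example_poly"
proof -
  have "interlace_code 10 ({0..<10}, example_edges) = example_poly"
    unfolding example_edges_def by code_simp
  then show ?thesis
    unfolding interlace_poly_def using interlace_code_eq[OF example_simple] by simp
qed

lemma example_interlace:
  assumes "10 \<le> n"
  shows "interlace_poly ({0..<n}, example_edges) = monom 1 (n - 10) * example_poly"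
proof -
  have "interlace_poly ({0..<n}, example_edges)
          = interlace_aux n ({0..<10} \<union> {10..<n}, example_edges)"
    unfolding interlace_poly_def using assms by (simp add: ivl_disj_un_two(3))
  also have "\<dots> = monom 1 (n - 10) * interlace_aux n ({0..<10}, example_edges)"
    using interlace_aux_isolated[OF example_simple, of 10 "{10..<n}" n] by simp
  also have "interlace_aux n ({0..<10}, example_edges) = example_poly"
    using interlace_poly_fuel[OF example_simple, of 10 n] assms example_interlace_10 by simp
  finally show ?thesis .
qed

text \<open>The coefficients 7, 6, 7 in degrees 2, 3, 4 form a dip, also after any shift.\<close>
lemma example_shift_not_unimodal: "\<not> unimodal_coeffs (monom 1 m * example_poly)"
proof (rule dip_not_unimodal[of "m + 2" "m + 3" "m + 4"])
  show "m + 4 \<le> degree (monom 1 m * example_poly)"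
    by (subst degree_monom_shift) simp_all
  show "coeff (monom 1 m * example_poly) (m + 3) < coeff (monom 1 m * example_poly) (m + 2)"
    "coeff (monom 1 m * example_poly) (m + 3) < coeff (monom 1 m * example_poly) (m + 4)"
    unfolding coeff_monom_shift by (simp_all add: numeral_eq_Suc)
qed simp_all

theorem mainTheorem3:
  shows "(\<forall>n::nat. n \<ge> 10 \<longrightarrow>
            (\<exists>E. simple_graph ({0..<n}, E) \<and> \<not> unimodal_coeffs (interlace_poly ({0..<n}, E))))
       \<and> (\<exists>E. simple_graph ({0..<10}, E) \<and>
            interlace_poly ({0..<10}, E) = [:0, 2, 7, 6, 7, 4, 3, 2, 1:])"
proof (intro conjI allI impI)
  fix n :: nat
  assume "n \<ge> 10"
  then show "\<exists>E. simple_graph ({0..<n}, E) \<and> \<not> unimodal_coeffs (interlace_poly ({0..<n}, E))"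
    using example_simple example_interlace example_shift_not_unimodal by metis
next
  show "\<exists>E. simple_graph ({0..<10}, E) \<and> interlace_poly ({0..<10}, E) = example_poly"
    using example_simple example_interlace_10 by blast
qed

end
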